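(* Let $D=(V,E)$ be a finite connected graph with weights $\mathbf c_e\ge1$, let $\Delta\subset V$ be nonempty, and let $\xi,\xi'$ be two absolute-value boundary conditions on $\Delta$ with $\xi\preceq_{abs}\xi'$. Let $F,G$ be increasing real functions of functions $V\to\mathbb Z$. Then $$\mathbb E^\xi_D[F(|h|)G(|h|)]\ge\mathbb E^\xi_D[F(|h|)]\,\mathbb E^\xi_D[G(|h|)]\qquad\text{and}\qquad \mathbb E^{\xi'}_D[F(|h|)]\ge\mathbb E^{\xi}_D[F(|h|)].$$
   Context: $\mathbb Z_{\rm odd}=2\mathbb Z+1$. A height function on $D$ is $h:V\to\mathbb Z_{\rm odd}$ with $|h(v)-h(w)|\le 2$ for all edges; weight $W(h)=\prod_{e=\langle v,w\rangle}\mathbf c_e^{\mathbb 1\{h(v)=h(w)\}}$. A (set-valued) boundary condition on $\Delta$ assigns to each $x\in\Delta$ a finite nonempty $\xi(x)\subset\mathbb Z_{\rm odd}$ such that some height function $h$ satisfies $h(x)\in\xi(x)$ for all $x\in\Delta$; $\mathbb P^\xi_D[\{h\}]\propto\mathbb 1\{h(x)\in\xi(x)\,\forall x\in\Delta\}W(h)$. For integers $a\le b$, $[a,b]$ denotes the set of odd integers in $[a,b]$ and $\pm[a,b]=[a,b]\cup[-b,-a]$. An absolute-value boundary condition is a boundary condition $\xi$ for which there is $S\subset\Delta$ (possibly empty) with $\xi(x)=[a(x),b(x)]$ for $x\in S$, where $-1\le a(x)\le b(x)$ and $a(x)+b(x)\ge2$, and $\xi(x)=\pm[a(x),b(x)]$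 for $x\in\Delta\setminus S$, where $1\le a(x)\le b(x)$. For two such conditions $\xi$ (with $S,a,b$) and $\xi'$ (with $S',a',b'$) write $\xi\preceq_{abs}\xi'$ if $S\subset S'$, $a\le a'$ and $b\le b'$ on $S\cup(\Delta\setminus S')$, and $b(x)\le|a'(x)|$ for all $x\in S'\setminus S$. A function $F$ is increasing if $f\le g$ pointwise implies $F(f)\le F(g)$. *)

theory Defs
  imports Complex_Main
begin

text \<open>Graph D = (V,E): V is the (finite) vertex type 'v (V = UNIV), E a set of
  unordered edges, each a two-element set of vertices.\<close>

definition simple_graph :: "'v set set \<Rightarrow> bool" where
  "simple_graph E \<longleftrightarrow> (\<forall>e\<in>E. card e = 2)"

definition graph_connected :: "'v set set \<Rightarrow> bool" where
  "graph_connected E \<longleftrightarrow> (\<forall>u v. (\<lambda>x y. {x, y} \<in> E)\<^sup>*\<^sup>* u v)"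

definition height_fun :: "'v set set \<Rightarrow> ('v \<Rightarrow> int) \<Rightarrow> bool" where
  "height_fun E h \<longleftrightarrow> (\<forall>v. odd (h v)) \<and>
     (\<forall>e\<in>E. \<forall>v w. e = {v, w} \<longrightarrow> \<bar>h v - h w\<bar> \<le> 2)"

definition weight :: "'v set set \<Rightarrow> ('v set \<Rightarrow> real) \<Rightarrow> ('v \<Rightarrow> int) \<Rightarrow> real" where
  "weight E c h = (\<Prod>e\<in>E. if (\<exists>v w. e = {v, w} \<and> h v = h w) then c e else 1)"

definition boundary_cond :: "'v set set \<Rightarrow> 'v set \<Rightarrow> ('v \<Rightarrow> int set) \<Rightarrow> bool" where
  "boundary_cond E \<Delta> \<xi> \<longleftrightarrow>
     (\<forall>x\<in>\<Delta>. finite (\<xi> x) \<and> \<xi> x \<noteq> {} \<and> (\<forall>k\<in>\<xi> x. odd k)) \<and>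
     (\<exists>h. height_fun E h \<and> (\<forall>x\<in>\<Delta>. h x \<in> \<xi> x))"

definition admissible :: "'v set set \<Rightarrow> 'v set \<Rightarrow> ('v \<Rightarrow> int set) \<Rightarrow> ('v \<Rightarrow> int) set" where
  "admissible E \<Delta> \<xi> = {h. height_fun E h \<and> (\<forall>x\<in>\<Delta>. h x \<in> \<xi> x)}"

definition expect :: "'v set set \<Rightarrow> ('v set \<Rightarrow> real) \<Rightarrow> 'v set \<Rightarrow> ('v \<Rightarrow> int set)
     \<Rightarrow> (('v \<Rightarrow> int) \<Rightarrow> real) \<Rightarrow> real" where
  "expect E c \<Delta> \<xi> f =
     (\<Sum>h\<in>admissible E \<Delta> \<xi>. weight E c h * f h) / (\<Sum>h\<in>admissible E \<Delta> \<xi>. weight E c h)"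

definition odd_interval :: "int \<Rightarrow> int \<Rightarrow> int set" where
  "odd_interval a b = {k. odd k \<and> a \<le> k \<and> k \<le> b}"

definition pm_interval :: "int \<Rightarrow> int \<Rightarrow> int set" where
  "pm_interval a b = odd_interval a b \<union> odd_interval (- b) (- a)"

definition abs_bc :: "'v set set \<Rightarrow> 'v set \<Rightarrow> ('v \<Rightarrow> int set) \<Rightarrow> 'v set
     \<Rightarrow> ('v \<Rightarrow> int) \<Rightarrow> ('v \<Rightarrow> int) \<Rightarrow> bool" where
  "abs_bc E \<Delta> \<xi> S a b \<longleftrightarrow> boundary_cond E \<Delta> \<xi> \<and> S \<subseteq> \<Delta> \<and>
     (\<forall>x\<in>S. \<xi> x = odd_interval (a x) (b x) \<and> -1 \<le> a x \<and> a x \<le> b x \<and> a x + b x \<ge> 2) \<and>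
     (\<forall>x\<in>\<Delta> - S. \<xi> x = pm_interval (a x) (b x) \<and> 1 \<le> a x \<and> a x \<le> b x)"

definition abs_le :: "'v set \<Rightarrow> 'v set \<Rightarrow> ('v \<Rightarrow> int) \<Rightarrow> ('v \<Rightarrow> int)
     \<Rightarrow> 'v set \<Rightarrow> ('v \<Rightarrow> int) \<Rightarrow> ('v \<Rightarrow> int) \<Rightarrow> bool" where
  "abs_le \<Delta> S a b S' a' b' \<longleftrightarrow> S \<subseteq> S' \<and>
     (\<forall>x\<in>S \<union> (\<Delta> - S'). a x \<le> a' x \<and> b x \<le> b' x) \<and>
     (\<forall>x\<in>S' - S. b x \<le> \<bar>a' x\<bar>)"

definition increasing_fn :: "(('v \<Rightarrow> int) \<Rightarrow> real) \<Rightarrow> bool" where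
  "increasing_fn F \<longleftrightarrow> (\<forall>f g. (\<forall>v. f v \<le> g v) \<longrightarrow> F f \<le> F g)"

end

theory Submission
  imports Defs
begin

text \<open>
  Given \<open>|h| = n\<close>, the signs of \<open>h\<close> form an Ising model on the graph plus a ghost vertex, with
  flip weights in \<open>[0, 1]\<close> determined by \<open>n\<close> and the boundary data. By the Edwards--Sokal
  expansion and the supermodularity of the number of clusters, its partition function is
  increasing and log-supermodular in the flip weights, and the flip weights are compatible with
  the lattice operations on \<open>n\<close>. Together with the log-supermodularity of the edge weights on
  height functions this gives the lattice condition \<open>\<mu>' n * \<mu> m \<le> \<mu>' (sup n m) * \<mu> (inf n m)\<close>
  for the unnormalised laws \<open>\<mu>\<close>, \<open>\<mu>'\<close> of \<open>|h|\<close> under \<open>\<xi>\<close> and \<open>\<xi>'\<close>, and the FKG and Holley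
  inequalities follow from the Ahlswede--Daykin four functions theorem on a box of odd values.
\<close>

section \<open>The Ahlswede--Daykin inequality\<close>

lemma ahlswede_daykin_two_point:
  fixes a0 a1 b0 b1 c0 c1 d0 d1 :: real
  assumes nn: "a0 \<ge> 0" "a1 \<ge> 0" "b0 \<ge> 0" "b1 \<ge> 0" "c0 \<ge> 0" "c1 \<ge> 0" "d0 \<ge> 0" "d1 \<ge> 0"
    and h00: "a0 * b0 \<le> c0 * d0" and h01: "a0 * b1 \<le> c1 * d0"
    and h10: "a1 * b0 \<le> c1 * d0" and h11: "a1 * b1 \<le> c1 * d1"
  shows "(a0 + a1) * (b0 + b1) \<le> (c0 + c1) * (d0 + d1)"
proof (cases "c1 * d0 = 0")
  case True
  have "a0 * b1 \<le> 0" "a1 * b0 \<le> 0" "c0 * d1 \<ge> 0" using h01 h10 True nn by simp_all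
  moreover have "(a0 + a1) * (b0 + b1) = a0 * b0 + a1 * b1 + a0 * b1 + a1 * b0"
    "(c0 + c1) * (d0 + d1) = c0 * d0 + c1 * d1 + c0 * d1 + c1 * d0" by (simp_all add: algebra_simps)
  ultimately show ?thesis using h00 h11 True by linarith
next
  case False
  define t where "t = c1 * d0"
  have t: "t > 0" using False nn by (simp add: t_def less_le)
  \<comment> \<open>the off-diagonal terms satisfy \<open>x + y \<le> t + x y / t\<close> since \<open>(t - x)(t - y) \<ge> 0\<close>\<close>
  have cross: "t * (a0 * b1 + a1 * b0) \<le> t * t + (a0 * b0) * (a1 * b1)"
  proof -
    have "0 \<le> (t - a0 * b1) * (t - a1 * b0)" using h01 h10 by (simp add: t_def)
    then show ?thesis by (simp add: algebra_simps)
  qed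
  have diag: "(a0 * b0) * (a1 * b1) \<le> (c0 * d0) * (c1 * d1)"
    using nn by (intro mult_mono h00 h11) auto
  have "(a0 + a1) * (b0 + b1) * t = a0 * b0 * t + a1 * b1 * t + t * (a0 * b1 + a1 * b0)"
    by (simp add: algebra_simps)
  also have "\<dots> \<le> c0 * d0 * t + c1 * d1 * t + t * t + (c0 * d0) * (c1 * d1)"
    using cross diag h00 h11 t by (smt (verit) mult_right_mono)
  also have "\<dots> = (c0 + c1) * (d0 + d1) * t" by (simp add: t_def algebra_simps)
  finally show ?thesis using t by simp
qed

lemma sum_Pow_insert:
  assumes "finite U" "z \<notin> U"
  shows "(\<Sum>X\<in>Pow (insert z U). f X) = (\<Sum>X\<in>Pow U. f X + f (insert z X))"
proof -
  have "(\<Sum>X\<in>Pow (insert z U). f X) = (\<Sum>X\<in>Pow U. f X) + (\<Sum>X\<in>insert z ` Pow U. f X)"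
    unfolding Pow_insert by (rule sum.union_disjoint) (use assms in auto)
  also have "(\<Sum>X\<in>insert z ` Pow U. f X) = (\<Sum>X\<in>Pow U. f (insert z X))"
    by (subst sum.reindex) (use assms in \<open>auto intro!: inj_onI simp: o_def\<close>)
  finally show ?thesis by (simp add: sum.distrib)
qed

theorem ahlswede_daykin:
  fixes f1 f2 f3 f4 :: "'a set \<Rightarrow> real"
  assumes "finite U"
    and "\<And>X. X \<subseteq> U \<Longrightarrow> f1 X \<ge> 0" "\<And>X. X \<subseteq> U \<Longrightarrow> f2 X \<ge> 0"
    and "\<And>X. X \<subseteq> U \<Longrightarrow> f3 X \<ge> 0" "\<And>X. X \<subseteq> U \<Longrightarrow> f4 X \<ge> 0"
    and "\<And>X Y. X \<subseteq> U \<Longrightarrow> Y \<subseteq> U \<Longrightarrow> f1 X * f2 Y \<le> f3 (X \<union> Y) * f4 (X \<inter> Y)"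
  shows "(\<Sum>X\<in>Pow U. f1 X) * (\<Sum>X\<in>Pow U. f2 X) \<le> (\<Sum>X\<in>Pow U. f3 X) * (\<Sum>X\<in>Pow U. f4 X)"
  using assms
proof (induction U arbitrary: f1 f2 f3 f4 rule: finite_induct)
  case empty
  then show ?case by simp
next
  case (insert z U)
  let ?g = "\<lambda>f X. f X + f (insert z X)"
  have "(\<Sum>X\<in>Pow U. ?g f1 X) * (\<Sum>X\<in>Pow U. ?g f2 X) \<le> (\<Sum>X\<in>Pow U. ?g f3 X) * (\<Sum>X\<in>Pow U. ?g f4 X)"
  proof (rule insert.IH)
    fix X assume X: "X \<subseteq> U"
    have s: "X \<subseteq> insert z U" "insert z X \<subseteq> insert z U" using X by auto
    show "?g f1 X \<ge> 0" "?g f2 X \<ge> 0" "?g f3 X \<ge> 0" "?g f4 X \<ge> 0"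
      using insert.prems(1-4)[OF s(1)] insert.prems(1-4)[OF s(2)] by auto
  next
    fix X Y assume X: "X \<subseteq> U" and Y: "Y \<subseteq> U"
    have zX: "z \<notin> X" and zY: "z \<notin> Y" using X Y insert.hyps by auto
    have s: "X \<subseteq> insert z U" "Y \<subseteq> insert z U" "insert z X \<subseteq> insert z U" "insert z Y \<subseteq> insert z U"
      using X Y by auto
    show "?g f1 X * ?g f2 Y \<le> ?g f3 (X \<union> Y) * ?g f4 (X \<inter> Y)"
    proof (rule ahlswede_daykin_two_point)
      show "f1 X * f2 Y \<le> f3 (X \<union> Y) * f4 (X \<inter> Y)" using insert.prems(5)[OF s(1,2)] .
      show "f1 X * f2 (insert z Y) \<le> f3 (insert z (X \<union> Y)) * f4 (X \<inter> Y)"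
        using insert.prems(5)[OF s(1,4)] zX by (simp add: Int_insert_right)
      show "f1 (insert z X) * f2 Y \<le> f3 (insert z (X \<union> Y)) * f4 (X \<inter> Y)"
        using insert.prems(5)[OF s(3,2)] zY by (simp add: Int_insert_left)
      show "f1 (insert z X) * f2 (insert z Y) \<le> f3 (insert z (X \<union> Y)) * f4 (insert z (X \<inter> Y))"
        using insert.prems(5)[OF s(3,4)] by simp
    qed (use s X Y in \<open>auto intro!: insert.prems(1-4)\<close>)
  qed
  then show ?case using insert.hyps by (simp add: sum_Pow_insert)
qed

section \<open>FKG and Holley inequalities on a box\<close>

definition nat_box :: "nat \<Rightarrow> ('v \<Rightarrow> nat) set" where
  "nat_box K = {t. \<forall>v. t v \<le> K}"

lemma finite_nat_box: "finite (nat_box K :: ('v::finite \<Rightarrow> nat) set)"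
proof -
  have "nat_box K = {t. \<forall>v. (v \<in> (UNIV :: 'v set) \<longrightarrow> t v \<in> {..K}) \<and> (v \<notin> UNIV \<longrightarrow> t v = 0)}"
    by (auto simp: nat_box_def)
  also have "finite \<dots>" by (rule finite_set_of_finite_funs) auto
  finally show ?thesis .
qed

lemma nat_box_sup_inf:
  "t \<in> nat_box K \<Longrightarrow> s \<in> nat_box K \<Longrightarrow> sup t s \<in> nat_box K \<and> inf t s \<in> nat_box K"
  by (auto simp: nat_box_def sup_max inf_min le_max_iff_disj min_le_iff_disj)

text \<open>The box is embedded as a sublattice of a power set by writing each coordinate in unary.\<close>

definition unary_code :: "('v \<Rightarrow> nat) \<Rightarrow> ('v \<times> nat) set" where
  "unary_code t = {(v, k). k < t v}"

lemma inj_unary_code: "inj unary_code"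
proof (rule injI, rule ext)
  fix t s :: "'v \<Rightarrow> nat" and v
  assume "unary_code t = unary_code s"
  then have "k < t v \<longleftrightarrow> k < s v" for k by (auto simp: unary_code_def set_eq_iff)
  then show "t v = s v" by (metis less_irrefl nat_neq_iff)
qed

lemma unary_code_sup: "unary_code (sup t s) = unary_code t \<union> unary_code s"
  and unary_code_inf: "unary_code (inf t s) = unary_code t \<inter> unary_code s"
  by (auto simp: unary_code_def sup_max inf_min)

lemma unary_code_subset: "t \<in> nat_box K \<Longrightarrow> unary_code t \<subseteq> UNIV \<times> {..<K}"
  by (auto simp: unary_code_def nat_box_def) (meson less_le_trans)

theorem ahlswede_daykin_nat_box:
  fixes f1 f2 f3 f4 :: "('v::finite \<Rightarrow> nat) \<Rightarrow> real"
  assumes nonneg: "\<And>t. t \<in> nat_box K \<Longrightarrow> f1 t \<ge> 0" "\<And>t. t \<in> nat_box K \<Longrightarrow> f2 t \<ge> 0"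
    "\<And>t. t \<in> nat_box K \<Longrightarrow> f3 t \<ge> 0" "\<And>t. t \<in> nat_box K \<Longrightarrow> f4 t \<ge> 0"
    and lattice: "\<And>t s. t \<in> nat_box K \<Longrightarrow> s \<in> nat_box K \<Longrightarrow> f1 t * f2 s \<le> f3 (sup t s) * f4 (inf t s)"
  shows "(\<Sum>t\<in>nat_box K. f1 t) * (\<Sum>t\<in>nat_box K. f2 t)
       \<le> (\<Sum>t\<in>nat_box K. f3 t) * (\<Sum>t\<in>nat_box K. f4 t)"
proof -
  define U :: "('v \<times> nat) set" where "U = UNIV \<times> {..<K}"
  define codes :: "('v \<times> nat) set set" where "codes = unary_code ` nat_box K"
  define lift :: "(('v \<Rightarrow> nat) \<Rightarrow> real) \<Rightarrow> ('v \<times> nat) set \<Rightarrow> real"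
    where "lift f X = (if X \<in> codes then f (the_inv_into (nat_box K) unary_code X) else 0)" for f X
  have inj: "inj_on unary_code (nat_box K)" using inj_unary_code by (rule inj_on_subset) simp
  have lift_code: "lift f (unary_code t) = f t" if "t \<in> nat_box K" for f t
    using that by (simp add: lift_def codes_def the_inv_into_f_f[OF inj])
  have lift_nonneg: "lift f X \<ge> 0" if "\<And>t. t \<in> nat_box K \<Longrightarrow> f t \<ge> 0" for f X
    using that by (auto simp: lift_def codes_def the_inv_into_f_f[OF inj])
  have sum_lift: "(\<Sum>X\<in>Pow U. lift f X) = (\<Sum>t\<in>nat_box K. f t)" for f
  proof -
    have "codes \<subseteq> Pow U" using unary_code_subset by (auto simp: codes_def U_def)
    then have "(\<Sum>X\<in>Pow U. lift f X) = (\<Sum>X\<in>codes. lift f X)"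
      by (intro sum.mono_neutral_right) (auto simp: U_def lift_def)
    also have "\<dots> = (\<Sum>t\<in>nat_box K. f t)"
      unfolding codes_def by (simp add: sum.reindex[OF inj] lift_code)
    finally show ?thesis .
  qed
  have "(\<Sum>X\<in>Pow U. lift f1 X) * (\<Sum>X\<in>Pow U. lift f2 X) \<le> (\<Sum>X\<in>Pow U. lift f3 X) * (\<Sum>X\<in>Pow U. lift f4 X)"
  proof (rule ahlswede_daykin)
    show "finite U" by (simp add: U_def)
    show "lift f1 X \<ge> 0" "lift f2 X \<ge> 0" "lift f3 X \<ge> 0" "lift f4 X \<ge> 0" for X
      using nonneg by (simp_all add: lift_nonneg)
  next
    fix X Y
    show "lift f1 X * lift f2 Y \<le> lift f3 (X \<union> Y) * lift f4 (X \<inter> Y)"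
    proof (cases "X \<in> codes \<and> Y \<in> codes")
      case True
      then obtain t s where ts: "t \<in> nat_box K" "s \<in> nat_box K" and "X = unary_code t" "Y = unary_code s"
        by (auto simp: codes_def)
      then show ?thesis
        using lattice[OF ts] nat_box_sup_inf[OF ts]
        by (simp add: lift_code ts flip: unary_code_sup unary_code_inf)
    next
      case False
      have "lift f3 (X \<union> Y) \<ge> 0" "lift f4 (X \<inter> Y) \<ge> 0"
        using nonneg by (simp_all add: lift_nonneg)
      then show ?thesis using False by (auto simp: lift_def)
    qed
  qed
  then show ?thesis by (simp add: sum_lift)
qed

lemma weighted_ahlswede_daykin_nat_box:
  fixes \<mu> \<nu> F G :: "('v::finite \<Rightarrow> nat) \<Rightarrow> real"
  assumes "\<And>t. 0 \<le> \<mu> t" "\<And>t. 0 \<le> \<nu> t"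
    and lattice: "\<And>s t. s \<in> nat_box K \<Longrightarrow> t \<in> nat_box K \<Longrightarrow> \<mu> s * \<nu> t \<le> \<mu> (sup s t) * \<nu> (inf s t)"
    and "mono F" "mono G" "\<And>t. 0 \<le> F t" "\<And>t. 0 \<le> G t"
  shows "(\<Sum>t\<in>nat_box K. \<nu> t * F t) * (\<Sum>t\<in>nat_box K. \<mu> t * G t)
       \<le> (\<Sum>t\<in>nat_box K. \<mu> t * (F t * G t)) * (\<Sum>t\<in>nat_box K. \<nu> t)"
proof (rule ahlswede_daykin_nat_box)
  fix t s :: "'v \<Rightarrow> nat" assume ts: "t \<in> nat_box K" "s \<in> nat_box K"
  have "F t * G s \<le> F (sup t s) * G (sup t s)"
    using assms(4-7) by (intro mult_mono) (auto simp: monoD)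
  then have "(\<nu> t * \<mu> s) * (F t * G s) \<le> (\<mu> (sup t s) * \<nu> (inf t s)) * (F (sup t s) * G (sup t s))"
    using lattice[OF ts(2,1)] assms by (simp add: mult_mono sup_commute inf_commute mult.commute)
  then show "\<nu> t * F t * (\<mu> s * G s) \<le> \<mu> (sup t s) * (F (sup t s) * G (sup t s)) * \<nu> (inf t s)"
    by (simp add: algebra_simps)
qed (use assms in auto)

lemma sum_weighted_shift:
  "(\<Sum>t\<in>A. \<mu> t * (F t - a)) = (\<Sum>t\<in>A. \<mu> t * F t) - a * (\<Sum>t\<in>A. \<mu> t)"
  for \<mu> F :: "'a \<Rightarrow> real"
  by (simp add: right_diff_distrib sum_subtractf sum_distrib_left mult.commute)

text \<open>Shifting by the value at the bottom element removes the sign condition of the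
  Ahlswede--Daykin inequality.\<close>

theorem fkg_nat_box:
  fixes \<mu> F G :: "('v::finite \<Rightarrow> nat) \<Rightarrow> real"
  assumes "\<And>t. 0 \<le> \<mu> t"
    and "\<And>t s. t \<in> nat_box K \<Longrightarrow> s \<in> nat_box K \<Longrightarrow> \<mu> t * \<mu> s \<le> \<mu> (sup t s) * \<mu> (inf t s)"
    and "mono F" "mono G"
  shows "(\<Sum>t\<in>nat_box K. \<mu> t * F t) * (\<Sum>t\<in>nat_box K. \<mu> t * G t)
       \<le> (\<Sum>t\<in>nat_box K. \<mu> t * (F t * G t)) * (\<Sum>t\<in>nat_box K. \<mu> t)"
proof -
  define a b where "a = F (\<lambda>_. 0)" and "b = G (\<lambda>_. 0)"
  define S SF SG SFG where "S = (\<Sum>t\<in>nat_box K. \<mu> t)" and "SF = (\<Sum>t\<in>nat_box K. \<mu> t * F t)"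
    and "SG = (\<Sum>t\<in>nat_box K. \<mu> t * G t)" and "SFG = (\<Sum>t\<in>nat_box K. \<mu> t * (F t * G t))"
  have bot: "(\<lambda>_. 0) \<le> t" for t :: "'v \<Rightarrow> nat" by (simp add: le_fun_def)
  have "(\<Sum>t\<in>nat_box K. \<mu> t * (F t - a)) * (\<Sum>t\<in>nat_box K. \<mu> t * (G t - b))
      \<le> (\<Sum>t\<in>nat_box K. \<mu> t * ((F t - a) * (G t - b))) * (\<Sum>t\<in>nat_box K. \<mu> t)"
    using assms bot by (intro weighted_ahlswede_daykin_nat_box)
      (auto simp: a_def b_def mono_def monoD)
  moreover have "(\<Sum>t\<in>nat_box K. \<mu> t * ((F t - a) * (G t - b))) = SFG - b * SF - a * SG + a * b * S"
    unfolding S_def SF_def SG_def SFG_def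
    by (simp add: algebra_simps sum_subtractf sum.distrib sum_distrib_left)
  ultimately have "(SF - a * S) * (SG - b * S) \<le> (SFG - b * SF - a * SG + a * b * S) * S"
    by (simp add: sum_weighted_shift S_def SF_def SG_def)
  then show ?thesis unfolding S_def [symmetric] SF_def [symmetric] SG_def [symmetric] SFG_def [symmetric]
    by (simp add: algebra_simps)
qed

theorem holley_nat_box:
  fixes \<mu> \<nu> F :: "('v::finite \<Rightarrow> nat) \<Rightarrow> real"
  assumes "\<And>t. 0 \<le> \<mu> t" "\<And>t. 0 \<le> \<nu> t"
    and "\<And>s t. s \<in> nat_box K \<Longrightarrow> t \<in> nat_box K \<Longrightarrow> \<mu> s * \<nu> t \<le> \<mu> (sup s t) * \<nu> (inf s t)"
    and "mono F"
  shows "(\<Sum>t\<in>nat_box K. \<nu> t * F t) * (\<Sum>t\<in>nat_box K. \<mu> t)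
       \<le> (\<Sum>t\<in>nat_box K. \<mu> t * F t) * (\<Sum>t\<in>nat_box K. \<nu> t)"
proof -
  define a where "a = F (\<lambda>_. 0)"
  have bot: "(\<lambda>_. 0) \<le> t" for t :: "'v \<Rightarrow> nat" by (simp add: le_fun_def)
  have "(\<Sum>t\<in>nat_box K. \<nu> t * (F t - a)) * (\<Sum>t\<in>nat_box K. \<mu> t * 1)
      \<le> (\<Sum>t\<in>nat_box K. \<mu> t * ((F t - a) * 1)) * (\<Sum>t\<in>nat_box K. \<nu> t)"
    using assms bot by (intro weighted_ahlswede_daykin_nat_box)
      (auto simp: a_def mono_def monoD)
  from this[unfolded mult_1_right sum_weighted_shift] show ?thesis by (simp add: algebra_simps)
qed

section \<open>Clusters and the Ising model\<close>

definition agrees_on :: "('a \<Rightarrow> 'w) \<Rightarrow> ('a \<Rightarrow> 'w) \<Rightarrow> 'a set \<Rightarrow> ('w \<Rightarrow> bool) \<Rightarrow> bool" where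
  "agrees_on p q W \<sigma> \<longleftrightarrow> (\<forall>e\<in>W. \<sigma> (p e) = \<sigma> (q e))"

text \<open>Edges are abstract, with endpoint maps \<open>p\<close> and \<open>q\<close>; \<open>spin_count p q W\<close> is
  \<open>2 ^ (number of clusters of W)\<close>.\<close>

definition spin_count :: "('a \<Rightarrow> 'w::finite) \<Rightarrow> ('a \<Rightarrow> 'w) \<Rightarrow> 'a set \<Rightarrow> real" where
  "spin_count p q W = real (card {\<sigma>. agrees_on p q W \<sigma>})"

definition linked :: "('a \<Rightarrow> 'w) \<Rightarrow> ('a \<Rightarrow> 'w) \<Rightarrow> 'a set \<Rightarrow> 'w \<Rightarrow> 'w \<Rightarrow> bool" where
  "linked p q W = (\<lambda>x y. \<exists>e\<in>W. (p e = x \<and> q e = y) \<or> (q e = x \<and> p e = y))\<^sup>*\<^sup>*"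

lemma agrees_on_linked:
  assumes "agrees_on p q W \<sigma>" "linked p q W x y"
  shows "\<sigma> y = \<sigma> x"
  using assms(2) unfolding linked_def
proof (induction rule: rtranclp_induct)
  case (step y z)
  then show ?case using assms(1) unfolding agrees_on_def by metis
qed simp

lemma linked_edge_iff:
  assumes "e \<in> W"
  shows "linked p q W x (p e) \<longleftrightarrow> linked p q W x (q e)"
proof
  assume "linked p q W x (p e)"
  then show "linked p q W x (q e)" unfolding linked_def
    by (rule rtranclp.rtrancl_into_rtrancl) (use assms in blast)
next
  assume "linked p q W x (q e)"
  then show "linked p q W x (p e)" unfolding linked_def
    by (rule rtranclp.rtrancl_into_rtrancl) (use assms in blast)
qed

lemma spin_count_pos: "spin_count p q W > 0"
proof -
  have "(\<lambda>_. True) \<in> {\<sigma>. agrees_on p q W \<sigma>}" by (simp add: agrees_on_def)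
  then show ?thesis by (auto simp: spin_count_def card_gt_0_iff)
qed

lemma spin_count_insert_eq:
  assumes "\<And>\<sigma>. agrees_on p q W \<sigma> \<Longrightarrow> \<sigma> (p e) = \<sigma> (q e)"
  shows "spin_count p q (insert e W) = spin_count p q W"
proof -
  have "{\<sigma>. agrees_on p q (insert e W) \<sigma>} = {\<sigma>. agrees_on p q W \<sigma>}"
    using assms by (auto simp: agrees_on_def)
  then show ?thesis by (simp add: spin_count_def)
qed

text \<open>If some configuration agreeing on \<open>W\<close> separates the ends of \<open>e\<close>, flipping the cluster
  of \<open>p e\<close> exchanges the configurations that do and do not agree on \<open>e\<close>.\<close>

lemma spin_count_insert_half:
  fixes p q :: "'a \<Rightarrow> 'w::finite"
  assumes "agrees_on p q W \<sigma>0" "\<sigma>0 (p e) \<noteq> \<sigma>0 (q e)"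
  shows "spin_count p q W = 2 * spin_count p q (insert e W)"
proof -
  define R where "R = {w. linked p q W (p e) w}"
  have pR: "p e \<in> R" by (simp add: R_def linked_def)
  have qR: "q e \<notin> R"
    using agrees_on_linked[OF assms(1), of "p e" "q e"] assms(2) by (auto simp: R_def)
  define flip where "flip \<sigma> w = (if w \<in> R then \<not> \<sigma> w else \<sigma> w)" for \<sigma> :: "'w \<Rightarrow> bool" and w
  have flip_flip: "flip (flip \<sigma>) = \<sigma>" for \<sigma> by (simp add: flip_def fun_eq_iff)
  have flip_ends: "flip \<sigma> (p e) = (\<not> \<sigma> (p e))" "flip \<sigma> (q e) = \<sigma> (q e)" for \<sigma>
    using pR qR by (simp_all add: flip_def)
  have "p e' \<in> R \<longleftrightarrow> q e' \<in> R" if "e' \<in> W" for e'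
    unfolding R_def mem_Collect_eq using that by (rule linked_edge_iff)
  then have agrees_flip: "agrees_on p q W (flip \<sigma>) \<longleftrightarrow> agrees_on p q W \<sigma>" for \<sigma>
    unfolding agrees_on_def flip_def by auto
  define P N where "P = {\<sigma>. agrees_on p q W \<sigma> \<and> \<sigma> (p e) = \<sigma> (q e)}"
    and "N = {\<sigma>. agrees_on p q W \<sigma> \<and> \<sigma> (p e) \<noteq> \<sigma> (q e)}"
  have "bij_betw flip P N"
    unfolding P_def N_def
    by (rule bij_betw_byWitness[where f'=flip]) (simp_all add: flip_flip agrees_flip flip_ends image_subset_iff)
  then have "card N = card P" by (simp add: bij_betw_same_card)
  moreover have "{\<sigma>. agrees_on p q W \<sigma>} = P \<union> N" "P \<inter> N = {}" "{\<sigma>. agrees_on p q (insert e W) \<sigma>} = P"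
    by (auto simp: P_def N_def agrees_on_def)
  ultimately show ?thesis by (simp add: spin_count_def card_Un_disjoint)
qed

text \<open>Adding an edge divides the spin count by \<open>2\<close> or by \<open>1\<close>, and the factor \<open>1\<close> is inherited
  by larger edge sets.\<close>

lemma spin_count_insert_ratio_mono:
  fixes p q :: "'a \<Rightarrow> 'w::finite"
  assumes "H1 \<subseteq> H2"
  shows "spin_count p q H2 * spin_count p q (insert e H1) \<le> spin_count p q (insert e H2) * spin_count p q H1"
proof (cases "\<exists>\<sigma>. agrees_on p q H1 \<sigma> \<and> \<sigma> (p e) \<noteq> \<sigma> (q e)")
  case False
  then have "\<sigma> (p e) = \<sigma> (q e)" if "agrees_on p q H2 \<sigma>" for \<sigma>
    using that assms by (auto simp: agrees_on_def)
  with False show ?thesis by (simp add: spin_count_insert_eq)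
next
  case True
  have "spin_count p q H2 \<le> 2 * spin_count p q (insert e H2)"
  proof (cases "\<exists>\<sigma>. agrees_on p q H2 \<sigma> \<and> \<sigma> (p e) \<noteq> \<sigma> (q e)")
    case True
    then show ?thesis using spin_count_insert_half by fastforce
  next
    case False
    then show ?thesis using spin_count_insert_eq[of p q H2 e] spin_count_pos[of p q H2] by auto
  qed
  with True show ?thesis
    using spin_count_insert_half[of p q H1 _ e] spin_count_pos[of p q "insert e H1"]
    by (auto intro: mult_right_mono)
qed

lemma spin_count_union_ratio_mono:
  fixes p q :: "'a \<Rightarrow> 'w::finite"
  assumes "finite X" "B \<subseteq> W"
  shows "spin_count p q W * spin_count p q (B \<union> X) \<le> spin_count p q (W \<union> X) * spin_count p q B"
  using assms(1)
proof (induction X rule: finite_induct)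
  case (insert e X)
  let ?N = "spin_count p q"
  have step: "?N (W \<union> X) * ?N (insert e (B \<union> X)) \<le> ?N (insert e (W \<union> X)) * ?N (B \<union> X)"
    by (rule spin_count_insert_ratio_mono) (use assms(2) in auto)
  have "?N W * ?N (insert e (B \<union> X)) * ?N (B \<union> X) \<le> ?N (W \<union> X) * ?N B * ?N (insert e (B \<union> X))"
    using insert.IH spin_count_pos[of p q] by (simp add: algebra_simps mult_right_mono)
  also have "\<dots> \<le> ?N (insert e (W \<union> X)) * ?N B * ?N (B \<union> X)"
    using step spin_count_pos[of p q B] by (simp add: algebra_simps mult_right_mono)
  finally show ?case using spin_count_pos[of p q "B \<union> X"] by simp
qed simp

theorem spin_count_supermodular:
  fixes p q :: "'a \<Rightarrow> 'w::finite"
  assumes "finite W'"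
  shows "spin_count p q W * spin_count p q W' \<le> spin_count p q (W \<union> W') * spin_count p q (W \<inter> W')"
proof -
  have "W \<inter> W' \<union> (W' - W) = W'" by auto
  then show ?thesis using spin_count_union_ratio_mono[of "W' - W" "W \<inter> W'" W p q] assms
    by (simp add: mult.commute)
qed

definition ising_Z :: "('a \<Rightarrow> 'w::finite) \<Rightarrow> ('a \<Rightarrow> 'w) \<Rightarrow> 'a set \<Rightarrow> ('a \<Rightarrow> real) \<Rightarrow> real" where
  "ising_Z p q A \<beta> = (\<Sum>\<sigma>::'w \<Rightarrow> bool\<in>UNIV. \<Prod>e\<in>A. if \<sigma> (p e) = \<sigma> (q e) then 1 else \<beta> e)"

definition bernoulli_weight :: "'a set \<Rightarrow> ('a \<Rightarrow> real) \<Rightarrow> 'a set \<Rightarrow> real" where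
  "bernoulli_weight A \<beta> W = (\<Prod>e\<in>W. 1 - \<beta> e) * (\<Prod>e\<in>A - W. \<beta> e)"

lemma ising_Z_random_cluster:
  fixes p q :: "'a \<Rightarrow> 'w::finite"
  assumes "finite A"
  shows "ising_Z p q A \<beta> = (\<Sum>W\<in>Pow A. bernoulli_weight A \<beta> W * spin_count p q W)"
proof -
  let ?agree = "\<lambda>\<sigma> e. if \<sigma> (p e) = \<sigma> (q e) then 1 else 0 :: real"
  have "ising_Z p q A \<beta> = (\<Sum>\<sigma>::'w \<Rightarrow> bool\<in>UNIV. \<Prod>e\<in>A. (1 - \<beta> e) * ?agree \<sigma> e + \<beta> e)"
    unfolding ising_Z_def by (intro sum.cong prod.cong) auto
  also have "\<dots> = (\<Sum>\<sigma>::'w \<Rightarrow> bool\<in>UNIV. \<Sum>W\<in>Pow A. (\<Prod>e\<in>W. (1 - \<beta> e) * ?agree \<sigma> e) * (\<Prod>e\<in>A - W. \<beta> e))"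
    by (intro sum.cong refl prod_add assms)
  also have "\<dots> = (\<Sum>\<sigma>::'w \<Rightarrow> bool\<in>UNIV. \<Sum>W\<in>Pow A. bernoulli_weight A \<beta> W * (if agrees_on p q W \<sigma> then 1 else 0))"
  proof (intro sum.cong refl)
    fix \<sigma> :: "'w \<Rightarrow> bool" and W assume "W \<in> Pow A"
    then have "finite W" using assms finite_subset by auto
    then have "(\<Prod>e\<in>W. ?agree \<sigma> e) = (if agrees_on p q W \<sigma> then 1 else 0)"
      by (simp add: agrees_on_def)
    then show "(\<Prod>e\<in>W. (1 - \<beta> e) * ?agree \<sigma> e) * (\<Prod>e\<in>A - W. \<beta> e)
        = bernoulli_weight A \<beta> W * (if agrees_on p q W \<sigma> then 1 else 0)"
      by (simp add: bernoulli_weight_def prod.distrib)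
  qed
  also have "\<dots> = (\<Sum>W\<in>Pow A. bernoulli_weight A \<beta> W * spin_count p q W)"
    by (subst sum.swap) (simp add: spin_count_def sum.If_cases flip: sum_distrib_left)
  finally show ?thesis .
qed

lemma bernoulli_weight_nonneg:
  assumes "\<And>e. e \<in> A \<Longrightarrow> 0 \<le> \<beta> e \<and> \<beta> e \<le> 1" "W \<subseteq> A"
  shows "bernoulli_weight A \<beta> W \<ge> 0"
  unfolding bernoulli_weight_def using assms by (intro mult_nonneg_nonneg prod_nonneg) auto

lemma bernoulli_weight_lattice:
  assumes "finite A"
    and "\<And>e. e \<in> A \<Longrightarrow> 0 \<le> \<beta> e \<and> \<beta> e \<le> 1" "\<And>e. e \<in> A \<Longrightarrow> 0 \<le> \<gamma> e \<and> \<gamma> e \<le> 1"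
    and "X \<subseteq> A" "Y \<subseteq> A"
  shows "bernoulli_weight A \<beta> X * bernoulli_weight A \<gamma> Y
    \<le> bernoulli_weight A (inf \<beta> \<gamma>) (X \<union> Y) * bernoulli_weight A (sup \<beta> \<gamma>) (X \<inter> Y)"
proof -
  let ?f = "\<lambda>\<delta> Z e. if e \<in> Z then 1 - \<delta> e else \<delta> e :: real"
  have prod_form: "bernoulli_weight A \<delta> Z = (\<Prod>e\<in>A. ?f \<delta> Z e)" if "Z \<subseteq> A" for \<delta> Z
  proof -
    have "A \<inter> Z = Z" using that by auto
    then show ?thesis using assms(1) by (simp add: bernoulli_weight_def prod.If_cases Diff_eq)
  qed
  have "bernoulli_weight A \<beta> X * bernoulli_weight A \<gamma> Y = (\<Prod>e\<in>A. ?f \<beta> X e * ?f \<gamma> Y e)"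
    using assms by (simp add: prod_form prod.distrib)
  also have "\<dots> \<le> (\<Prod>e\<in>A. ?f (inf \<beta> \<gamma>) (X \<union> Y) e * ?f (sup \<beta> \<gamma>) (X \<inter> Y) e)"
  proof (rule prod_mono)
    fix e assume "e \<in> A"
    then have "0 \<le> \<beta> e" "\<beta> e \<le> 1" "0 \<le> \<gamma> e" "\<gamma> e \<le> 1" using assms by auto
    moreover have "x * (1 - y) \<le> (1 - x) * y" if "x \<le> y" for x y :: real
      using that by (simp add: algebra_simps)
    ultimately show "0 \<le> ?f \<beta> X e * ?f \<gamma> Y e \<and>
        ?f \<beta> X e * ?f \<gamma> Y e \<le> ?f (inf \<beta> \<gamma>) (X \<union> Y) e * ?f (sup \<beta> \<gamma>) (X \<inter> Y) e"
      by (cases "e \<in> X"; cases "e \<in> Y")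
        (auto simp: inf_min sup_max min_def max_def intro: mult_mono mult_nonneg_nonneg)
  qed
  also have "\<dots> = bernoulli_weight A (inf \<beta> \<gamma>) (X \<union> Y) * bernoulli_weight A (sup \<beta> \<gamma>) (X \<inter> Y)"
  proof -
    have "X \<union> Y \<subseteq> A" "X \<inter> Y \<subseteq> A" using assms by auto
    then show ?thesis by (simp only: prod_form prod.distrib)
  qed
  finally show ?thesis .
qed

theorem ising_Z_log_supermodular:
  fixes p q :: "'a \<Rightarrow> 'w::finite"
  assumes "finite A"
    and "\<And>e. e \<in> A \<Longrightarrow> 0 \<le> \<beta> e \<and> \<beta> e \<le> 1" "\<And>e. e \<in> A \<Longrightarrow> 0 \<le> \<gamma> e \<and> \<gamma> e \<le> 1"
  shows "ising_Z p q A \<beta> * ising_Z p q A \<gamma> \<le> ising_Z p q A (inf \<beta> \<gamma>) * ising_Z p q A (sup \<beta> \<gamma>)"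
  unfolding ising_Z_random_cluster[OF assms(1)]
proof (rule ahlswede_daykin[OF assms(1)])
  have bounds: "0 \<le> \<delta> e \<and> \<delta> e \<le> 1" if "\<delta> \<in> {\<beta>, \<gamma>, inf \<beta> \<gamma>, sup \<beta> \<gamma>}" "e \<in> A" for \<delta> e
    using that assms(2,3)[of e] by (auto simp: inf_min sup_max min_def max_def)
  have weight_nonneg: "0 \<le> bernoulli_weight A \<delta> X" if "\<delta> \<in> {\<beta>, \<gamma>, inf \<beta> \<gamma>, sup \<beta> \<gamma>}" "X \<subseteq> A" for \<delta> X
    using that bounds by (intro bernoulli_weight_nonneg) auto
  note count_nonneg = spin_count_pos[of p q, THEN less_imp_le]
  fix X assume X: "X \<subseteq> A"
  show "0 \<le> bernoulli_weight A \<beta> X * spin_count p q X" "0 \<le> bernoulli_weight A \<gamma> X * spin_count p q X"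
    "0 \<le> bernoulli_weight A (inf \<beta> \<gamma>) X * spin_count p q X"
    "0 \<le> bernoulli_weight A (sup \<beta> \<gamma>) X * spin_count p q X"
    using weight_nonneg X count_nonneg by simp_all
  fix Y assume Y: "Y \<subseteq> A"
  have "bernoulli_weight A \<beta> X * bernoulli_weight A \<gamma> Y * (spin_count p q X * spin_count p q Y)
      \<le> bernoulli_weight A (inf \<beta> \<gamma>) (X \<union> Y) * bernoulli_weight A (sup \<beta> \<gamma>) (X \<inter> Y)
        * (spin_count p q (X \<union> Y) * spin_count p q (X \<inter> Y))"
  proof (rule mult_mono)
    show "spin_count p q X * spin_count p q Y \<le> spin_count p q (X \<union> Y) * spin_count p q (X \<inter> Y)"
      using Y assms(1) finite_subset by (blast intro: spin_count_supermodular)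
    have "X \<union> Y \<subseteq> A" "X \<inter> Y \<subseteq> A" using X Y by auto
    then show "0 \<le> bernoulli_weight A (inf \<beta> \<gamma>) (X \<union> Y) * bernoulli_weight A (sup \<beta> \<gamma>) (X \<inter> Y)"
      using weight_nonneg by simp
  qed (use X Y count_nonneg in \<open>auto intro: bernoulli_weight_lattice[OF assms]\<close>)
  then show "bernoulli_weight A \<beta> X * spin_count p q X * (bernoulli_weight A \<gamma> Y * spin_count p q Y)
      \<le> bernoulli_weight A (inf \<beta> \<gamma>) (X \<union> Y) * spin_count p q (X \<union> Y)
        * (bernoulli_weight A (sup \<beta> \<gamma>) (X \<inter> Y) * spin_count p q (X \<inter> Y))"
    by (simp add: algebra_simps)
qed

lemma ising_Z_mono:
  assumes "\<And>e. e \<in> A \<Longrightarrow> 0 \<le> \<beta> e \<and> \<beta> e \<le> \<gamma> e"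
  shows "ising_Z p q A \<beta> \<le> ising_Z p q A \<gamma>"
  unfolding ising_Z_def using assms by (intro sum_mono prod_mono) auto

lemma ising_Z_nonneg:
  assumes "\<And>e. e \<in> A \<Longrightarrow> 0 \<le> \<beta> e"
  shows "ising_Z p q A \<beta> \<ge> 0"
  unfolding ising_Z_def using assms by (intro sum_nonneg prod_nonneg) auto

section \<open>Weights of height functions\<close>

definition end1 :: "'v set \<Rightarrow> 'v" where
  "end1 e = (SOME u. u \<in> e)"

definition end2 :: "'v set \<Rightarrow> 'v" where
  "end2 e = (SOME v. v \<in> e \<and> v \<noteq> end1 e)"

lemma edge_ends:
  assumes "card e = 2"
  shows "e = {end1 e, end2 e}" "end1 e \<noteq> end2 e"
proof -
  obtain x y where xy: "e = {x, y}" "x \<noteq> y" using assms by (auto simp: card_2_iff)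
  then have "\<exists>u. u \<in> e" by auto
  then have 1: "end1 e \<in> e" unfolding end1_def by (rule someI_ex)
  with xy have "\<exists>v. v \<in> e \<and> v \<noteq> end1 e" by auto
  then have 2: "end2 e \<in> e \<and> end2 e \<noteq> end1 e" unfolding end2_def by (rule someI_ex)
  from 1 2 xy show "e = {end1 e, end2 e}" "end1 e \<noteq> end2 e" by auto
qed

lemma edge_eq_ends_iff:
  assumes "card e = 2"
  shows "e = {v, w} \<longleftrightarrow> (v = end1 e \<and> w = end2 e) \<or> (v = end2 e \<and> w = end1 e)"
  using edge_ends[OF assms] by (metis doubleton_eq_iff)

lemma height_fun_iff:
  assumes "simple_graph E"
  shows "height_fun E h \<longleftrightarrow> (\<forall>v. odd (h v)) \<and> (\<forall>e\<in>E. \<bar>h (end1 e) - h (end2 e)\<bar> \<le> 2)"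
  using assms unfolding height_fun_def simple_graph_def
  by (auto simp: edge_eq_ends_iff abs_minus_commute)

lemma weight_eq:
  assumes "simple_graph E"
  shows "weight E c h = (\<Prod>e\<in>E. if h (end1 e) = h (end2 e) then c e else 1)"
  unfolding weight_def
  by (rule prod.cong) (use assms in \<open>auto simp: simple_graph_def edge_eq_ends_iff\<close>)

lemma weight_nonneg: "\<forall>e\<in>E. c e \<ge> 1 \<Longrightarrow> weight E c h \<ge> 0"
  unfolding weight_def by (intro prod_nonneg) (auto intro: order_trans[of 0 1])

lemma weight_ge_1: "\<forall>e\<in>E. c e \<ge> 1 \<Longrightarrow> finite E \<Longrightarrow> weight E c h \<ge> 1"
  unfolding weight_def by (rule prod_ge_1) auto

lemma odd_max_or_min_eq:
  fixes k m1 m2 :: int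
  assumes "odd k" "odd m1" "odd m2" "\<bar>m1 - m2\<bar> \<le> 2"
  shows "max k m1 = max k m2 \<or> min k m1 = min k m2"
  using assms unfolding max_def min_def by presburger

lemma edge_weight_lattice:
  fixes n1 n2 m1 m2 :: int and c :: real
  assumes "odd n1" "odd n2" "odd m1" "odd m2" "\<bar>n1 - n2\<bar> \<le> 2" "\<bar>m1 - m2\<bar> \<le> 2" "c \<ge> 1"
  shows "(if n1 = n2 then c else 1) * (if m1 = m2 then c else 1)
     \<le> (if max n1 m1 = max n2 m2 then c else 1) * (if min n1 m1 = min n2 m2 then c else 1)"
proof -
  have "c \<le> c * c \<and> 1 \<le> c * c" using assms(7) by (smt (verit) mult_le_cancel_left1)
  moreover have "n1 = n2 \<Longrightarrow> max n1 m1 = max n2 m2 \<or> min n1 m1 = min n2 m2"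
    "m1 = m2 \<Longrightarrow> max n1 m1 = max n2 m2 \<or> min n1 m1 = min n2 m2"
    using odd_max_or_min_eq[of n1 m1 m2] odd_max_or_min_eq[of m1 n1 n2] assms
    by (auto simp: max.commute min.commute)
  ultimately show ?thesis using assms(7) by auto
qed

lemma height_fun_edge: "height_fun E h \<Longrightarrow> {v, w} \<in> E \<Longrightarrow> \<bar>h v - h w\<bar> \<le> 2"
  unfolding height_fun_def by blast

lemma height_fun_sup_inf:
  assumes n: "height_fun E n" and m: "height_fun E m"
  shows "height_fun E (sup n m)" "height_fun E (inf n m)"
proof -
  have "\<bar>max (n v) (m v) - max (n w) (m w)\<bar> \<le> 2 \<and> \<bar>min (n v) (m v) - min (n w) (m w)\<bar> \<le> 2"
    if "{v, w} \<in> E" for v w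
    using height_fun_edge[OF n that] height_fun_edge[OF m that] by (simp add: abs_le_iff max_def min_def)
  moreover have "odd (max (n v) (m v)) \<and> odd (min (n v) (m v))" for v
    using n m unfolding height_fun_def by (simp add: max_def min_def)
  ultimately show "height_fun E (sup n m)" "height_fun E (inf n m)"
    unfolding height_fun_def by (auto simp: sup_max inf_min)
qed

theorem weight_lattice:
  assumes "simple_graph E" "\<forall>e\<in>E. c e \<ge> 1" "height_fun E n" "height_fun E m"
  shows "weight E c n * weight E c m \<le> weight E c (sup n m) * weight E c (inf n m)"
proof -
  let ?w = "\<lambda>h e. if h (end1 e) = h (end2 e) then c e else 1"
  have "weight E c n * weight E c m = (\<Prod>e\<in>E. ?w n e * ?w m e)"
    using assms(1) by (simp add: weight_eq prod.distrib)
  also have "\<dots> \<le> (\<Prod>e\<in>E. ?w (sup n m) e * ?w (inf n m) e)"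
  proof (rule prod_mono)
    fix e assume "e \<in> E"
    then show "0 \<le> ?w n e * ?w m e \<and> ?w n e * ?w m e \<le> ?w (sup n m) e * ?w (inf n m) e"
      using edge_weight_lattice[of "n (end1 e)" "n (end2 e)" "m (end1 e)" "m (end2 e)" "c e"] assms
      by (auto simp: height_fun_iff sup_max inf_min)
  qed
  also have "\<dots> = weight E c (sup n m) * weight E c (inf n m)"
    using assms(1) by (simp add: weight_eq prod.distrib)
  finally show ?thesis .
qed

lemma prod_if_else_zero:
  assumes "finite A"
  shows "(\<Prod>e\<in>A. if P e then f e else 0 :: real) = (if \<forall>e\<in>A. P e then \<Prod>e\<in>A. f e else 0)"
  using assms by (induction A rule: finite_induct) auto

definition edge_factor :: "('v set \<Rightarrow> real) \<Rightarrow> ('v \<Rightarrow> int) \<Rightarrow> 'v set \<Rightarrow> real" where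
  "edge_factor c h e =
     (if \<bar>h (end1 e) - h (end2 e)\<bar> \<le> 2 then if h (end1 e) = h (end2 e) then c e else 1 else 0)"

lemma prod_edge_factor:
  fixes E :: "'v::finite set set"
  assumes "simple_graph E" "\<forall>v. odd (h v)"
  shows "(\<Prod>e\<in>E. edge_factor c h e) = (if height_fun E h then weight E c h else 0)"
  using assms by (simp add: edge_factor_def prod_if_else_zero height_fun_iff weight_eq)

section \<open>The law of the absolute value\<close>

definition signed :: "('v \<Rightarrow> bool) \<Rightarrow> ('v \<Rightarrow> int) \<Rightarrow> 'v \<Rightarrow> int" where
  "signed \<sigma> n v = (if \<sigma> v then n v else - n v)"

text \<open>Given \<open>|h| = n\<close>, the signs of \<open>h\<close> form an Ising model on the graph with an extra ghost
  vertex \<open>None\<close> (pinned to \<open>+\<close>) joined to every vertex: the sign may change along an edge only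
  if both ends have \<open>|h| = 1\<close>, at the price of the factor \<open>1 / c e\<close>, and a vertex of \<open>S\<close> may
  be negative only if \<open>n x = 1\<close> and \<open>a x = -1\<close>.\<close>

definition abs_coupling :: "('v set \<Rightarrow> real) \<Rightarrow> 'v set \<Rightarrow> ('v \<Rightarrow> int) \<Rightarrow> ('v \<Rightarrow> int) \<Rightarrow> 'v set + 'v \<Rightarrow> real"
  where
  "abs_coupling c S a n = case_sum
     (\<lambda>e. if n (end1 e) = 1 \<and> n (end2 e) = 1 then 1 / c e else 0)
     (\<lambda>x. if x \<in> S \<and> \<not> (n x = 1 \<and> a x = -1) then 0 else 1)"

definition ghost_end1 :: "'v set + 'v \<Rightarrow> 'v option" where
  "ghost_end1 = case_sum (\<lambda>e. Some (end1 e)) Some"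

definition ghost_end2 :: "'v set + 'v \<Rightarrow> 'v option" where
  "ghost_end2 = case_sum (\<lambda>e. Some (end2 e)) (\<lambda>_. None)"

definition ghost_edges :: "'v set set \<Rightarrow> ('v set + 'v) set" where
  "ghost_edges E = Inl ` E \<union> range Inr"

lemma edge_factor_signed:
  assumes "odd (n (end1 e))" "odd (n (end2 e))" "n (end1 e) \<ge> 1" "n (end2 e) \<ge> 1" "c e \<ge> 1"
  shows "edge_factor c (signed \<sigma> n) e
    = edge_factor c n e * (if \<sigma> (end1 e) = \<sigma> (end2 e) then 1 else abs_coupling c S a n (Inl e))"
proof (cases "\<sigma> (end1 e) = \<sigma> (end2 e)")
  case True
  then show ?thesis by (cases "\<sigma> (end1 e)") (auto simp: edge_factor_def signed_def abs_minus_commute)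
next
  case False
  then have "\<bar>signed \<sigma> n (end1 e) - signed \<sigma> n (end2 e)\<bar> = n (end1 e) + n (end2 e)"
    "signed \<sigma> n (end1 e) \<noteq> signed \<sigma> n (end2 e)"
    using assms(3,4) by (cases "\<sigma> (end1 e)"; simp add: signed_def)+
  moreover have "n (end1 e) + n (end2 e) \<le> 2 \<longleftrightarrow> n (end1 e) = 1 \<and> n (end2 e) = 1"
    using assms(3,4) by auto
  ultimately show ?thesis using False assms(5) by (auto simp: edge_factor_def abs_coupling_def)
qed

lemma signed_mem_odd_interval:
  fixes k :: int
  assumes "odd k" "1 \<le> k" "-1 \<le> a" "2 \<le> a + b"
  shows "(if s then k else - k) \<in> odd_interval a b \<longleftrightarrow> (a \<le> k \<and> k \<le> b) \<and> (s \<or> (k = 1 \<and> a = -1))"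
  using assms by (cases s) (auto simp: odd_interval_def)

lemma signed_mem_pm_interval:
  fixes k :: int
  assumes "odd k" "1 \<le> k" "1 \<le> a"
  shows "(if s then k else - k) \<in> pm_interval a b \<longleftrightarrow> a \<le> k \<and> k \<le> b"
  using assms by (cases s) (auto simp: pm_interval_def odd_interval_def)

lemma abs_bc_mem_signed:
  assumes "abs_bc E \<Delta> \<xi> S a b" "x \<in> \<Delta>" "odd k" "k \<ge> 1"
  shows "(if s then k else - k) \<in> \<xi> x \<longleftrightarrow> (a x \<le> k \<and> k \<le> b x) \<and> (s \<or> x \<notin> S \<or> (k = 1 \<and> a x = -1))"
  using assms signed_mem_odd_interval[OF assms(3,4), of "a x" "b x" s]
    signed_mem_pm_interval[OF assms(3,4), of "a x" s "b x"]
  unfolding abs_bc_def by (cases "x \<in> S") auto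

lemma vertex_indicator_signed:
  assumes "abs_bc E \<Delta> \<xi> S a b" "odd (n x)" "n x \<ge> 1"
  shows "(if x \<in> \<Delta> \<longrightarrow> signed \<sigma> n x \<in> \<xi> x then 1 else 0)
    = (if x \<in> \<Delta> \<longrightarrow> a x \<le> n x \<and> n x \<le> b x then 1 else 0 :: real)
      * (if \<sigma> x then 1 else abs_coupling c S a n (Inr x))"
proof (cases "x \<in> \<Delta>")
  case True
  then show ?thesis
    using abs_bc_mem_signed[OF assms(1) True assms(2,3), of "\<sigma> x"]
    by (auto simp: signed_def abs_coupling_def)
next
  case False
  then have "x \<notin> S" using assms(1) by (auto simp: abs_bc_def)
  with False show ?thesis by (simp add: abs_coupling_def)
qed

lemma admissible_weight_signed:
  fixes E :: "'v::finite set set"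
  assumes "simple_graph E" "abs_bc E \<Delta> \<xi> S a b" "\<forall>e\<in>E. c e \<ge> 1" "\<forall>v. odd (n v) \<and> n v \<ge> 1"
  shows "(if signed \<sigma> n \<in> admissible E \<Delta> \<xi> then weight E c (signed \<sigma> n) else 0)
    = (if height_fun E n \<and> (\<forall>x\<in>\<Delta>. a x \<le> n x \<and> n x \<le> b x) then weight E c n else 0)
      * ((\<Prod>e\<in>E. if \<sigma> (end1 e) = \<sigma> (end2 e) then 1 else abs_coupling c S a n (Inl e))
         * (\<Prod>x\<in>UNIV. if \<sigma> x then 1 else abs_coupling c S a n (Inr x)))"
proof -
  let ?edge = "\<lambda>e. if \<sigma> (end1 e) = \<sigma> (end2 e) then 1 else abs_coupling c S a n (Inl e)"
  let ?vertex = "\<lambda>x. if \<sigma> x then 1 else abs_coupling c S a n (Inr x)"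
  let ?box = "\<lambda>x. if x \<in> \<Delta> \<longrightarrow> a x \<le> n x \<and> n x \<le> b x then 1 else 0 :: real"
  have odd_signed: "\<forall>v. odd (signed \<sigma> n v)" using assms(4) by (simp add: signed_def)
  have "(if signed \<sigma> n \<in> admissible E \<Delta> \<xi> then weight E c (signed \<sigma> n) else 0)
      = (\<Prod>e\<in>E. edge_factor c (signed \<sigma> n) e)
        * (\<Prod>x\<in>UNIV. if x \<in> \<Delta> \<longrightarrow> signed \<sigma> n x \<in> \<xi> x then 1 else 0)"
    using prod_edge_factor[OF assms(1) odd_signed, of c]
    by (simp add: prod_if_else_zero admissible_def)
  also have "\<dots> = (\<Prod>e\<in>E. edge_factor c n e * ?edge e) * (\<Prod>x\<in>UNIV. ?box x * ?vertex x)"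
    using assms(3,4)
    by (intro arg_cong2[where f = "(*)"] prod.cong refl edge_factor_signed vertex_indicator_signed[OF assms(2)])
      simp_all
  also have "\<dots> = ((\<Prod>e\<in>E. edge_factor c n e) * (\<Prod>x\<in>UNIV. ?box x))
      * ((\<Prod>e\<in>E. ?edge e) * (\<Prod>x\<in>UNIV. ?vertex x))"
    by (simp add: prod.distrib)
  also have "(\<Prod>e\<in>E. edge_factor c n e) * (\<Prod>x\<in>UNIV. ?box x)
      = (if height_fun E n \<and> (\<forall>x\<in>\<Delta>. a x \<le> n x \<and> n x \<le> b x) then weight E c n else 0)"
    using assms(4) by (auto simp: prod_edge_factor[OF assms(1)] prod_if_else_zero)
  finally show ?thesis .
qed

lemma ising_Z_pinned:
  fixes p q :: "'a \<Rightarrow> 'w::finite"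
  shows "ising_Z p q A \<beta> = 2 * (\<Sum>\<sigma>\<in>{\<sigma>. \<sigma> w}. \<Prod>e\<in>A. if \<sigma> (p e) = \<sigma> (q e) then 1 else \<beta> e)"
proof -
  let ?P = "\<lambda>\<sigma>::'w \<Rightarrow> bool. \<Prod>e\<in>A. if \<sigma> (p e) = \<sigma> (q e) then 1 else \<beta> e"
  define neg where "neg \<sigma> = (\<lambda>x. \<not> \<sigma> x)" for \<sigma> :: "'w \<Rightarrow> bool"
  have UNIV_split: "UNIV = {\<sigma>. \<sigma> w} \<union> neg ` {\<sigma>. \<sigma> w}"
    by (auto simp: neg_def image_iff intro: exI[where x = "\<lambda>x. \<not> _ x"])
  have "inj neg" by (rule injI) (simp add: neg_def fun_eq_iff)
  then have "(\<Sum>\<sigma>\<in>neg ` {\<sigma>. \<sigma> w}. ?P \<sigma>) = (\<Sum>\<sigma>\<in>{\<sigma>. \<sigma> w}. ?P (neg \<sigma>))"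
    by (simp add: sum.reindex inj_on_subset)
  also have "\<dots> = (\<Sum>\<sigma>\<in>{\<sigma>. \<sigma> w}. ?P \<sigma>)" by (simp add: neg_def)
  moreover have "{\<sigma>. \<sigma> w} \<inter> neg ` {\<sigma>. \<sigma> w} = {}" by (auto simp: neg_def)
  ultimately show ?thesis
    unfolding ising_Z_def by (subst UNIV_split, subst sum.union_disjoint) simp_all
qed

definition abs_weight :: "'v set set \<Rightarrow> ('v set \<Rightarrow> real) \<Rightarrow> 'v set \<Rightarrow> ('v \<Rightarrow> int set) \<Rightarrow> ('v \<Rightarrow> int) \<Rightarrow> real"
  where
  "abs_weight E c \<Delta> \<xi> n = (\<Sum>h\<in>{h \<in> admissible E \<Delta> \<xi>. (\<lambda>v. \<bar>h v\<bar>) = n}. weight E c h)"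

lemma abs_weight_sum_signs:
  fixes n :: "'v::finite \<Rightarrow> int"
  assumes "\<forall>v. n v \<ge> 1"
  shows "abs_weight E c \<Delta> \<xi> n
    = (\<Sum>\<sigma>\<in>UNIV. if signed \<sigma> n \<in> admissible E \<Delta> \<xi> then weight E c (signed \<sigma> n) else 0)"
proof -
  have "inj (\<lambda>\<sigma>. signed \<sigma> n)"
  proof (rule injI)
    fix \<sigma> \<tau> assume eq: "signed \<sigma> n = signed \<tau> n"
    show "\<sigma> = \<tau>"
    proof
      fix v
      have "signed \<sigma> n v = signed \<tau> n v" using eq by simp
      then show "\<sigma> v = \<tau> v" using assms[rule_format, of v] by (auto simp: signed_def split: if_splits)
    qed
  qed
  moreover have "{h \<in> admissible E \<Delta> \<xi>. (\<lambda>v. \<bar>h v\<bar>) = n}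
      = (\<lambda>\<sigma>. signed \<sigma> n) ` {\<sigma>. signed \<sigma> n \<in> admissible E \<Delta> \<xi>}"
  proof (intro set_eqI iffI)
    fix h assume h: "h \<in> {h \<in> admissible E \<Delta> \<xi>. (\<lambda>v. \<bar>h v\<bar>) = n}"
    then have "n = (\<lambda>v. \<bar>h v\<bar>)" by simp
    then have "h = signed (\<lambda>v. h v > 0) n" by (auto simp: signed_def fun_eq_iff)
    with h show "h \<in> (\<lambda>\<sigma>. signed \<sigma> n) ` {\<sigma>. signed \<sigma> n \<in> admissible E \<Delta> \<xi>}" by auto
  next
    fix h assume "h \<in> (\<lambda>\<sigma>. signed \<sigma> n) ` {\<sigma>. signed \<sigma> n \<in> admissible E \<Delta> \<xi>}"
    moreover have "\<bar>n v\<bar> = n v" for v using assms[rule_format, of v] by simp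
    ultimately show "h \<in> {h \<in> admissible E \<Delta> \<xi>. (\<lambda>v. \<bar>h v\<bar>) = n}"
      by (auto simp: signed_def fun_eq_iff)
  qed
  ultimately show ?thesis
    unfolding abs_weight_def by (simp add: sum.reindex inj_on_subset sum.If_cases)
qed

lemma ising_Z_ghost:
  fixes E :: "'v::finite set set"
  shows "ising_Z ghost_end1 ghost_end2 (ghost_edges E) \<beta>
    = 2 * (\<Sum>\<sigma>\<in>UNIV. (\<Prod>e\<in>E. if \<sigma> (end1 e) = \<sigma> (end2 e) then 1 else \<beta> (Inl e))
                     * (\<Prod>x\<in>UNIV. if \<sigma> x then 1 else \<beta> (Inr x)))"
proof -
  let ?P = "\<lambda>\<tau>. \<Prod>z\<in>ghost_edges E. if \<tau> (ghost_end1 z) = \<tau> (ghost_end2 z) then 1 else \<beta> z"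
  have "inj (case_option True :: ('v \<Rightarrow> bool) \<Rightarrow> _)"
  proof (rule injI)
    fix \<sigma> \<tau> :: "'v \<Rightarrow> bool" assume "case_option True \<sigma> = case_option True \<tau>"
    then have "case_option True \<sigma> (Some v) = case_option True \<tau> (Some v)" for v by simp
    then show "\<sigma> = \<tau>" by (simp add: fun_eq_iff)
  qed
  moreover have "{\<tau> :: 'v option \<Rightarrow> bool. \<tau> None} = range (case_option True)"
  proof (intro set_eqI iffI)
    fix \<tau> :: "'v option \<Rightarrow> bool" assume "\<tau> \<in> {\<tau>. \<tau> None}"
    then have "\<tau> = case_option True (\<lambda>v. \<tau> (Some v))" by (simp add: fun_eq_iff split: option.split)
    then show "\<tau> \<in> range (case_option True)" by blast
  qed auto
  ultimately have "(\<Sum>\<tau>\<in>{\<tau>. \<tau> None}. ?P \<tau>) = (\<Sum>\<sigma>\<in>UNIV. ?P (case_option True \<sigma>))"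
    by (simp add: sum.reindex)
  moreover have "?P (case_option True \<sigma>) = (\<Prod>e\<in>E. if \<sigma> (end1 e) = \<sigma> (end2 e) then 1 else \<beta> (Inl e))
      * (\<Prod>x\<in>UNIV. if \<sigma> x then 1 else \<beta> (Inr x))" for \<sigma>
  proof -
    have "?P (case_option True \<sigma>) = (\<Prod>z\<in>Inl ` E. if case_option True \<sigma> (ghost_end1 z) = case_option True \<sigma> (ghost_end2 z) then 1 else \<beta> z)
        * (\<Prod>z\<in>range Inr. if case_option True \<sigma> (ghost_end1 z) = case_option True \<sigma> (ghost_end2 z) then 1 else \<beta> z)"
      unfolding ghost_edges_def by (rule prod.union_disjoint) auto
    then show ?thesis by (simp add: prod.reindex ghost_end1_def ghost_end2_def)
  qed
  ultimately show ?thesis by (simp add: ising_Z_pinned[where w = None])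
qed

theorem abs_weight_eq_ising:
  fixes E :: "'v::finite set set"
  assumes "simple_graph E" "abs_bc E \<Delta> \<xi> S a b" "\<forall>e\<in>E. c e \<ge> 1" "\<forall>v. odd (n v) \<and> n v \<ge> 1"
  shows "2 * abs_weight E c \<Delta> \<xi> n
    = (if height_fun E n \<and> (\<forall>x\<in>\<Delta>. a x \<le> n x \<and> n x \<le> b x) then weight E c n else 0)
      * ising_Z ghost_end1 ghost_end2 (ghost_edges E) (abs_coupling c S a n)"
  using assms(4)
  by (simp add: abs_weight_sum_signs admissible_weight_signed[OF assms] ising_Z_ghost
      sum_distrib_left mult.left_commute)

lemma abs_weight_nonneg: "\<forall>e\<in>E. c e \<ge> 1 \<Longrightarrow> abs_weight E c \<Delta> \<xi> n \<ge> 0"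
  unfolding abs_weight_def by (intro sum_nonneg weight_nonneg)

lemma abs_weight_nonzero:
  fixes E :: "'v::finite set set"
  assumes "simple_graph E" "abs_bc E \<Delta> \<xi> S a b" "\<forall>e\<in>E. c e \<ge> 1" "abs_weight E c \<Delta> \<xi> n \<noteq> 0"
  shows "\<forall>v. odd (n v) \<and> n v \<ge> 1" "height_fun E n" "\<forall>x\<in>\<Delta>. a x \<le> n x \<and> n x \<le> b x"
proof -
  obtain h where h: "h \<in> admissible E \<Delta> \<xi>" "(\<lambda>v. \<bar>h v\<bar>) = n"
    using assms(4) unfolding abs_weight_def by (metis (mono_tags, lifting) empty_Collect_eq sum.empty)
  have "odd (n v) \<and> n v \<ge> 1" for v
  proof -
    have "odd (h v)" "n v = \<bar>h v\<bar>" using h by (auto simp: admissible_def height_fun_def)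
    then show ?thesis by (cases "h v = 0") auto
  qed
  then show n: "\<forall>v. odd (n v) \<and> n v \<ge> 1" by blast
  show "height_fun E n" "\<forall>x\<in>\<Delta>. a x \<le> n x \<and> n x \<le> b x"
    using abs_weight_eq_ising[OF assms(1-3) n] assms(4) by (auto split: if_splits)
qed

lemma abs_le_box_sup_inf:
  assumes "abs_bc E \<Delta> \<xi> S a b" "abs_bc E \<Delta> \<xi>' S' a' b'" "abs_le \<Delta> S a b S' a' b'"
    and "\<forall>v. 1 \<le> n v" "\<forall>v. 1 \<le> m v"
    and "\<forall>x\<in>\<Delta>. a' x \<le> n x \<and> n x \<le> b' x" "\<forall>x\<in>\<Delta>. a x \<le> m x \<and> m x \<le> b x"
  shows "\<forall>x\<in>\<Delta>. a' x \<le> sup n m x \<and> sup n m x \<le> b' x" "\<forall>x\<in>\<Delta>. a x \<le> inf n m x \<and> inf n m x \<le> b x"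
proof -
  have "a' x \<le> max (n x) (m x) \<and> max (n x) (m x) \<le> b' x \<and> a x \<le> min (n x) (m x) \<and> min (n x) (m x) \<le> b x"
    if x: "x \<in> \<Delta>" for x
  proof -
    have bounds: "1 \<le> n x" "a' x \<le> n x" "n x \<le> b' x" "1 \<le> m x" "a x \<le> m x" "m x \<le> b x"
      using assms(4-7) x by auto
    consider "x \<in> S \<union> (\<Delta> - S')" | "x \<in> S' - S" using assms(3) x by (auto simp: abs_le_def)
    then show ?thesis
    proof cases
      case 1
      then have "a x \<le> a' x" "b x \<le> b' x" using assms(3) by (auto simp: abs_le_def)
      then show ?thesis using bounds by auto
    next
      case 2
      then have "b x \<le> \<bar>a' x\<bar>" "-1 \<le> a' x" "1 \<le> a x"
        using assms(1-3) x by (auto simp: abs_le_def abs_bc_def)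
      then have "m x \<le> n x" using bounds by (cases "a' x \<ge> 0") auto
      then show ?thesis using bounds by auto
    qed
  qed
  then show "\<forall>x\<in>\<Delta>. a' x \<le> sup n m x \<and> sup n m x \<le> b' x" "\<forall>x\<in>\<Delta>. a x \<le> inf n m x \<and> inf n m x \<le> b x"
    by (simp_all add: sup_max inf_min)
qed

lemma abs_coupling_bounds:
  assumes "\<forall>e\<in>E. c e \<ge> 1" "z \<in> ghost_edges E"
  shows "0 \<le> abs_coupling c S a n z \<and> abs_coupling c S a n z \<le> 1"
  using assms by (auto simp: ghost_edges_def abs_coupling_def)

lemma abs_coupling_sup_inf:
  assumes "abs_bc E \<Delta> \<xi> S a b" "abs_bc E \<Delta> \<xi>' S' a' b'" "abs_le \<Delta> S a b S' a' b'"
    and "\<forall>e\<in>E. c e \<ge> 1" "z \<in> ghost_edges E"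
    and "\<forall>v. 1 \<le> n v" "\<forall>v. 1 \<le> m v" "\<forall>x\<in>\<Delta>. m x \<le> b x"
  shows "inf (abs_coupling c S' a' n) (abs_coupling c S a m) z \<le> abs_coupling c S' a' (sup n m) z"
    and "sup (abs_coupling c S' a' n) (abs_coupling c S a m) z \<le> abs_coupling c S a (inf n m) z"
proof -
  have "inf (abs_coupling c S' a' n) (abs_coupling c S a m) z \<le> abs_coupling c S' a' (sup n m) z
      \<and> sup (abs_coupling c S' a' n) (abs_coupling c S a m) z \<le> abs_coupling c S a (inf n m) z"
  proof (cases z)
    case (Inl e)
    then have "c e \<ge> 1" using assms(4,5) by (auto simp: ghost_edges_def)
    moreover have "max k l = 1 \<longleftrightarrow> k = 1 \<and> l = 1" "min k l = 1 \<longleftrightarrow> k = 1 \<or> l = 1"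
      if "1 \<le> k" "1 \<le> l" for k l :: int
      using that by auto
    ultimately show ?thesis
      using Inl assms(6,7) by (auto simp: abs_coupling_def inf_min sup_max)
  next
    case (Inr x)
    have "S \<subseteq> S'" "S' \<subseteq> \<Delta>" using assms(2,3) by (auto simp: abs_le_def abs_bc_def)
    moreover have "a x \<le> a' x" "-1 \<le> a x" if "x \<in> S"
      using that assms(1,3) by (auto simp: abs_le_def abs_bc_def)
    moreover have "m x \<le> 1" if "x \<in> S' - S" "a' x = -1"
      using that assms(3,8) \<open>S' \<subseteq> \<Delta>\<close> by (force simp: abs_le_def)
    ultimately show ?thesis
      using Inr assms(6,7)[rule_format, of x] by (auto simp: abs_coupling_def inf_min sup_max max_def min_def)
  qed
  then show "inf (abs_coupling c S' a' n) (abs_coupling c S a m) z \<le> abs_coupling c S' a' (sup n m) z"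
    and "sup (abs_coupling c S' a' n) (abs_coupling c S a m) z \<le> abs_coupling c S a (inf n m) z"
    by auto
qed

lemma ising_Z_abs_coupling_lattice:
  fixes E :: "'v::finite set set"
  assumes "abs_bc E \<Delta> \<xi> S a b" "abs_bc E \<Delta> \<xi>' S' a' b'" "abs_le \<Delta> S a b S' a' b'"
    and "\<forall>e\<in>E. c e \<ge> 1" "\<forall>v. 1 \<le> n v" "\<forall>v. 1 \<le> m v" "\<forall>x\<in>\<Delta>. m x \<le> b x"
  defines "Z \<equiv> ising_Z ghost_end1 ghost_end2 (ghost_edges E)"
  shows "Z (abs_coupling c S' a' n) * Z (abs_coupling c S a m)
    \<le> Z (abs_coupling c S' a' (sup n m)) * Z (abs_coupling c S a (inf n m))"
proof -
  note bounds = abs_coupling_bounds[OF assms(4)]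
  note sup_inf = abs_coupling_sup_inf[OF assms(1-4) _ assms(5-7)]
  have "Z (abs_coupling c S' a' n) * Z (abs_coupling c S a m)
      \<le> Z (inf (abs_coupling c S' a' n) (abs_coupling c S a m))
        * Z (sup (abs_coupling c S' a' n) (abs_coupling c S a m))"
    unfolding Z_def using bounds by (intro ising_Z_log_supermodular) auto
  also have "\<dots> \<le> Z (abs_coupling c S' a' (sup n m)) * Z (abs_coupling c S a (inf n m))"
    unfolding Z_def using bounds sup_inf
    by (intro mult_mono ising_Z_mono ising_Z_nonneg) (auto simp: inf_min sup_max le_max_iff_disj)
  finally show ?thesis .
qed

theorem abs_weight_lattice:
  fixes E :: "'v::finite set set"
  assumes sg: "simple_graph E" and c: "\<forall>e\<in>E. c e \<ge> 1"
    and bc: "abs_bc E \<Delta> \<xi> S a b" and bc': "abs_bc E \<Delta> \<xi>' S' a' b'" and le: "abs_le \<Delta> S a b S' a' b'"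
  shows "abs_weight E c \<Delta> \<xi>' n * abs_weight E c \<Delta> \<xi> m
    \<le> abs_weight E c \<Delta> \<xi>' (sup n m) * abs_weight E c \<Delta> \<xi> (inf n m)"
proof (cases "abs_weight E c \<Delta> \<xi>' n = 0 \<or> abs_weight E c \<Delta> \<xi> m = 0")
  case True
  then show ?thesis using abs_weight_nonneg[OF c] by (auto intro: mult_nonneg_nonneg)
next
  case False
  let ?Z = "ising_Z ghost_end1 ghost_end2 (ghost_edges E)"
  from False have "abs_weight E c \<Delta> \<xi>' n \<noteq> 0" "abs_weight E c \<Delta> \<xi> m \<noteq> 0" by auto
  note n = abs_weight_nonzero[OF sg bc' c this(1)] and m = abs_weight_nonzero[OF sg bc c this(2)]
  have sup_inf: "\<forall>v. odd (sup n m v) \<and> sup n m v \<ge> 1" "\<forall>v. odd (inf n m v) \<and> inf n m v \<ge> 1"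
    "height_fun E (sup n m)" "height_fun E (inf n m)"
    "\<forall>x\<in>\<Delta>. a' x \<le> sup n m x \<and> sup n m x \<le> b' x" "\<forall>x\<in>\<Delta>. a x \<le> inf n m x \<and> inf n m x \<le> b x"
    using n m height_fun_sup_inf abs_le_box_sup_inf[OF bc bc' le]
    by (simp_all add: sup_max inf_min max_def min_def)
  have "(2 * abs_weight E c \<Delta> \<xi>' n) * (2 * abs_weight E c \<Delta> \<xi> m)
      = (weight E c n * weight E c m) * (?Z (abs_coupling c S' a' n) * ?Z (abs_coupling c S a m))"
    using n m by (simp add: abs_weight_eq_ising[OF sg bc' c] abs_weight_eq_ising[OF sg bc c])
  also have "\<dots> \<le> (weight E c (sup n m) * weight E c (inf n m))
      * (?Z (abs_coupling c S' a' (sup n m)) * ?Z (abs_coupling c S a (inf n m)))"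
  proof (rule mult_mono)
    show "weight E c n * weight E c m \<le> weight E c (sup n m) * weight E c (inf n m)"
      using weight_lattice[OF sg c] n m by simp
    show "?Z (abs_coupling c S' a' n) * ?Z (abs_coupling c S a m)
        \<le> ?Z (abs_coupling c S' a' (sup n m)) * ?Z (abs_coupling c S a (inf n m))"
      using ising_Z_abs_coupling_lattice[OF bc bc' le c] n m by simp
  qed (use weight_nonneg[OF c] abs_coupling_bounds[OF c] in \<open>auto intro!: mult_nonneg_nonneg ising_Z_nonneg\<close>)
  also have "\<dots> = (2 * abs_weight E c \<Delta> \<xi>' (sup n m)) * (2 * abs_weight E c \<Delta> \<xi> (inf n m))"
    using sup_inf by (simp add: abs_weight_eq_ising[OF sg bc' c] abs_weight_eq_ising[OF sg bc c])
  finally show ?thesis by simp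
qed

lemma height_fun_relpowp_bound:
  assumes "height_fun E h" "((\<lambda>x y. {x, y} \<in> E) ^^ k) x0 v"
  shows "\<bar>h v - h x0\<bar> \<le> 2 * int k"
  using assms(2)
proof (induction k arbitrary: v)
  case (Suc k)
  then obtain u where "((\<lambda>x y. {x, y} \<in> E) ^^ k) x0 u" "{u, v} \<in> E" by auto
  with Suc.IH height_fun_edge[OF assms(1)] show ?case by fastforce
qed simp

lemma admissible_bounded:
  fixes E :: "'v::finite set set"
  assumes "graph_connected E" "boundary_cond E \<Delta> \<xi>" "\<Delta> \<noteq> {}"
  shows "\<exists>K. \<forall>h\<in>admissible E \<Delta> \<xi>. \<forall>v. \<bar>h v\<bar> \<le> 2 * int K + 1"
proof -
  obtain x0 where x0: "x0 \<in> \<Delta>" using assms(3) by auto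
  define M where "M = Max (abs ` \<xi> x0)"
  have M: "\<bar>k\<bar> \<le> M" if "k \<in> \<xi> x0" for k
    using that assms(2) x0 by (auto simp: M_def boundary_cond_def)
  have "\<exists>k. ((\<lambda>x y. {x, y} \<in> E) ^^ k) x0 v" for v
    using assms(1) by (simp add: graph_connected_def rtranclp_imp_relpowp)
  then obtain dist where dist: "((\<lambda>x y. {x, y} \<in> E) ^^ dist v) x0 v" for v by metis
  have "\<bar>h v\<bar> \<le> M + 2 * int (Max (range dist))" if "h \<in> admissible E \<Delta> \<xi>" for h v
  proof -
    have "\<bar>h v - h x0\<bar> \<le> 2 * int (dist v)"
      using that dist by (intro height_fun_relpowp_bound) (auto simp: admissible_def)
    moreover have "\<bar>h x0\<bar> \<le> M" using that x0 M by (auto simp: admissible_def)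
    moreover have "dist v \<le> Max (range dist)" by simp
    ultimately show ?thesis by linarith
  qed
  moreover have "M + 2 * int (Max (range dist)) \<le> 2 * int (nat (M + 2 * int (Max (range dist)))) + 1"
    by simp
  ultimately show ?thesis by (meson order.trans)
qed

lemma finite_bounded_int_funs: "finite {h :: 'v::finite \<Rightarrow> int. \<forall>v. \<bar>h v\<bar> \<le> B}"
proof -
  have "{h :: 'v \<Rightarrow> int. \<forall>v. \<bar>h v\<bar> \<le> B} = {h. \<forall>v. (v \<in> UNIV \<longrightarrow> h v \<in> {-B..B}) \<and> (v \<notin> UNIV \<longrightarrow> h v = 0)}"
    by (auto simp: abs_le_iff minus_le_iff)
  also have "finite \<dots>" by (rule finite_set_of_finite_funs) auto
  finally show ?thesis .
qed

definition odd_of :: "('v \<Rightarrow> nat) \<Rightarrow> 'v \<Rightarrow> int" where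
  "odd_of t v = 2 * int (t v) + 1"

lemma odd_of_sup: "odd_of (sup t s) = sup (odd_of t) (odd_of s)"
  and odd_of_inf: "odd_of (inf t s) = inf (odd_of t) (odd_of s)"
  by (auto simp: odd_of_def fun_eq_iff sup_max inf_min max_def min_def)

lemma mono_increasing_fn_odd_of: "increasing_fn F \<Longrightarrow> mono (\<lambda>t. F (odd_of t))"
  by (auto simp: increasing_fn_def odd_of_def mono_def le_fun_def)

lemma sum_admissible_by_abs:
  fixes E :: "'v::finite set set"
  assumes bounded: "\<forall>h\<in>admissible E \<Delta> \<xi>. \<forall>v. \<bar>h v\<bar> \<le> 2 * int K + 1"
  shows "(\<Sum>h\<in>admissible E \<Delta> \<xi>. weight E c h * \<phi> (\<lambda>v. \<bar>h v\<bar>))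
    = (\<Sum>t\<in>nat_box K. abs_weight E c \<Delta> \<xi> (odd_of t) * \<phi> (odd_of t))"
proof -
  define half where "half h v = nat (\<bar>h v\<bar> div 2)" for h :: "'v \<Rightarrow> int" and v
  have fin: "finite (admissible E \<Delta> \<xi>)"
    using bounded by (intro finite_subset[OF _ finite_bounded_int_funs]) auto
  have odd_half: "odd_of (half h) = (\<lambda>v. \<bar>h v\<bar>)" if "h \<in> admissible E \<Delta> \<xi>" for h
  proof -
    have "odd (h v)" for v using that by (simp add: admissible_def height_fun_def)
    then show ?thesis by (simp add: fun_eq_iff odd_of_def half_def odd_two_times_div_two_succ)
  qed
  have "half h \<in> nat_box K" if "h \<in> admissible E \<Delta> \<xi>" for h
  proof -
    have "\<bar>h v\<bar> div 2 \<le> (2 * int K + 1) div 2" for v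
      using bounded that by (intro zdiv_mono1) auto
    then show ?thesis by (simp add: half_def nat_box_def nat_le_iff)
  qed
  moreover have "half h = t \<longleftrightarrow> (\<lambda>v. \<bar>h v\<bar>) = odd_of t" if "h \<in> admissible E \<Delta> \<xi>" for h t
  proof
    assume "(\<lambda>v. \<bar>h v\<bar>) = odd_of t"
    then have "\<bar>h v\<bar> = 2 * int (t v) + 1" for v by (simp add: fun_eq_iff odd_of_def)
    then show "half h = t" by (simp add: fun_eq_iff half_def)
  qed (use odd_half[OF that] in simp)
  ultimately have "(\<Sum>h\<in>admissible E \<Delta> \<xi>. weight E c h * \<phi> (\<lambda>v. \<bar>h v\<bar>))
      = (\<Sum>t\<in>nat_box K. \<Sum>h\<in>{h \<in> admissible E \<Delta> \<xi>. (\<lambda>v. \<bar>h v\<bar>) = odd_of t}. weight E c h * \<phi> (odd_of t))"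
    by (subst sum.group[OF fin finite_nat_box, of half, symmetric]) (auto intro!: sum.cong)
  then show ?thesis by (simp add: abs_weight_def sum_distrib_right)
qed

lemma expect_abs_nat_box:
  fixes E :: "'v::finite set set"
  assumes "\<forall>h\<in>admissible E \<Delta> \<xi>. \<forall>v. \<bar>h v\<bar> \<le> 2 * int K + 1"
  shows "expect E c \<Delta> \<xi> (\<lambda>h. \<phi> (\<lambda>v. \<bar>h v\<bar>))
    = (\<Sum>t\<in>nat_box K. abs_weight E c \<Delta> \<xi> (odd_of t) * \<phi> (odd_of t))
      / (\<Sum>t\<in>nat_box K. abs_weight E c \<Delta> \<xi> (odd_of t))"
  using sum_admissible_by_abs[OF assms, of c \<phi>] sum_admissible_by_abs[OF assms, of c "\<lambda>_. 1"]
  by (simp add: expect_def)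

lemma sum_abs_weight_pos:
  fixes E :: "'v::finite set set"
  assumes "\<forall>e\<in>E. c e \<ge> 1" "boundary_cond E \<Delta> \<xi>" "\<forall>h\<in>admissible E \<Delta> \<xi>. \<forall>v. \<bar>h v\<bar> \<le> 2 * int K + 1"
  shows "(\<Sum>t\<in>nat_box K. abs_weight E c \<Delta> \<xi> (odd_of t)) > 0"
proof -
  obtain h0 where h0: "h0 \<in> admissible E \<Delta> \<xi>" using assms(2) by (auto simp: boundary_cond_def admissible_def)
  have "finite (admissible E \<Delta> \<xi>)"
    using assms(3) by (intro finite_subset[OF _ finite_bounded_int_funs]) auto
  then have "1 \<le> (\<Sum>h\<in>admissible E \<Delta> \<xi>. weight E c h)"
    using h0 weight_ge_1[OF assms(1)] weight_nonneg[OF assms(1)]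
    by (meson finite_class.finite_UNIV finite_subset member_le_sum order.trans subset_UNIV)
  then show ?thesis using sum_admissible_by_abs[OF assms(3), of c "\<lambda>_. 1"] by simp
qed

lemma abs_le_refl: "abs_le \<Delta> S a b S a b"
  by (simp add: abs_le_def)

theorem proposition4p2:
  fixes E :: "('v::finite) set set" and c :: "'v set \<Rightarrow> real"
    and \<Delta> S S' :: "'v set" and \<xi> \<xi>' :: "'v \<Rightarrow> int set"
    and a b a' b' :: "'v \<Rightarrow> int"
    and F G :: "('v \<Rightarrow> int) \<Rightarrow> real"
  assumes "simple_graph E" and "graph_connected E"
    and "\<forall>e\<in>E. c e \<ge> 1"
    and "\<Delta> \<noteq> {}"
    and "abs_bc E \<Delta> \<xi> S a b" and "abs_bc E \<Delta> \<xi>' S' a' b'"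
    and "abs_le \<Delta> S a b S' a' b'"
    and "increasing_fn F" and "increasing_fn G"
  shows "expect E c \<Delta> \<xi> (\<lambda>h. F (\<lambda>v. \<bar>h v\<bar>) * G (\<lambda>v. \<bar>h v\<bar>))
           \<ge> expect E c \<Delta> \<xi> (\<lambda>h. F (\<lambda>v. \<bar>h v\<bar>)) * expect E c \<Delta> \<xi> (\<lambda>h. G (\<lambda>v. \<bar>h v\<bar>)) \<and>
         expect E c \<Delta> \<xi>' (\<lambda>h. F (\<lambda>v. \<bar>h v\<bar>)) \<ge> expect E c \<Delta> \<xi> (\<lambda>h. F (\<lambda>v. \<bar>h v\<bar>))"
proof -
  have bc: "boundary_cond E \<Delta> \<xi>" "boundary_cond E \<Delta> \<xi>'" using assms(5,6) by (auto simp: abs_bc_def)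
  obtain K1 K2 where "\<forall>h\<in>admissible E \<Delta> \<xi>. \<forall>v. \<bar>h v\<bar> \<le> 2 * int K1 + 1"
    "\<forall>h\<in>admissible E \<Delta> \<xi>'. \<forall>v. \<bar>h v\<bar> \<le> 2 * int K2 + 1"
    using admissible_bounded[OF assms(2) _ assms(4)] bc by metis
  moreover have "2 * int K1 + 1 \<le> 2 * int (max K1 K2) + 1" "2 * int K2 + 1 \<le> 2 * int (max K1 K2) + 1"
    by simp_all
  ultimately have bounded: "\<forall>h\<in>admissible E \<Delta> \<xi>. \<forall>v. \<bar>h v\<bar> \<le> 2 * int (max K1 K2) + 1"
    "\<forall>h\<in>admissible E \<Delta> \<xi>'. \<forall>v. \<bar>h v\<bar> \<le> 2 * int (max K1 K2) + 1"
    by (meson order.trans)+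
  define \<mu> \<mu>' where "\<mu> t = abs_weight E c \<Delta> \<xi> (odd_of t)" and "\<mu>' t = abs_weight E c \<Delta> \<xi>' (odd_of t)"
    for t :: "'v \<Rightarrow> nat"
  let ?S = "\<lambda>f. \<Sum>t\<in>nat_box (max K1 K2). f t"
  note lattice = abs_weight_lattice[OF assms(1,3)] and nonneg = abs_weight_nonneg[OF assms(3)]
  have "?S (\<lambda>t. \<mu> t * F (odd_of t)) * ?S (\<lambda>t. \<mu> t * G (odd_of t))
      \<le> ?S (\<lambda>t. \<mu> t * (F (odd_of t) * G (odd_of t))) * ?S \<mu>"
    using lattice[OF assms(5,5) abs_le_refl] nonneg assms(8,9)
    by (intro fkg_nat_box mono_increasing_fn_odd_of) (simp_all add: \<mu>_def odd_of_sup odd_of_inf)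
  moreover have "?S (\<lambda>t. \<mu> t * F (odd_of t)) * ?S \<mu>' \<le> ?S (\<lambda>t. \<mu>' t * F (odd_of t)) * ?S \<mu>"
    using lattice[OF assms(5-7)] nonneg assms(8)
    by (intro holley_nat_box mono_increasing_fn_odd_of) (simp_all add: \<mu>_def \<mu>'_def odd_of_sup odd_of_inf)
  moreover note sum_abs_weight_pos[OF assms(3) bc(1) bounded(1)] sum_abs_weight_pos[OF assms(3) bc(2) bounded(2)]
  ultimately show ?thesis
    by (simp add: expect_abs_nat_box[OF bounded(1)] expect_abs_nat_box[OF bounded(2)]
        expect_abs_nat_box[OF bounded(1), of c "\<lambda>n. F n * G n"] \<mu>_def \<mu>'_def field_simps)
qed

end
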